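(* Consider Algorithm NCB run with inputs $k\ge2$ and $T$ on an instance with $\mu^*\ge\frac{32\sqrt{k\log k\log T}}{\sqrt T}$, and let $i^*$ be an arm with $\mu_{i^*}=\mu^*$. On the event $G$, for every round $t>\widetilde T$ (i.e. every round of Phase II), the Nash confidence bound of $i^*$ at round $t$ satisfies $\mathrm{NCB}_{i^*,t}\ge\mu^*$.
   Context: Bandit setup: $k$ arms, arm $i$ a distribution on $[0,1]$ with mean $\mu_i$, $\mu^*:=\max_i\mu_i$. $\log$ is the natural logarithm. Canonical model: a $k\times T$ table $(Y_{i,s})$ of independent entries with $Y_{i,s}$ distributed as arm $i$; the $s$-th pull of arm $i$ yields $Y_{i,s}$. Let $\widehat\mu_{i,s}:=\frac1s\sum_{r=1}^sY_{i,r}$. Algorithm NCB (inputs $k,T$): $\widetilde T:=16\sqrt{\frac{kT\log T}{\log k}}$. Phase I: in each round $t\le\widetilde T$ pull a uniformly random arm. Phase II: in each round $\widetilde T<t\le T$ pull an arm maximizing $\mathrm{NCB}_i:=\widehat\mu_i+4\sqrt{\widehat\mu_i\log T/n_i}$, where $n_i$ is the number of pulls of $i$ before the round and $\widehat\mu_i$ its empirical mean (ties arbitrary); $\mathrm{NCB}_{i,t}$ denotes this value at round $t$. Events: $G_1$: every arm is pulled at least $\frac{\widetilde T}{2k}$ times in Phase I. $G_2$: for every arm $i$ with $\mu_i>\frac{6\sqrt{k\log k\log T}}{\sqrt T}$ and every integer $s$ with $\frac{\widetilde T}{2k}\le s\le T$, $|\mu_i-\widehat\mu_{i,s}|\le 3\sqrt{\frac{\mu_i\log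 T}{s}}$. $G_3$: for every arm $j$ with $\mu_j\le\frac{6\sqrt{k\log k\log T}}{\sqrt T}$ and every integer $s$ with $\frac{\widetilde T}{2k}\le s\le T$, $\widehat\mu_{j,s}\le \frac{9\sqrt{k\log k\log T}}{\sqrt T}$. $G:=G_1\cap G_2\cap G_3$. *)

theory Defs
  imports Complex_Main
begin

text \<open>Deterministic rendering of one outcome of the canonical model.
  Arms are 0..<k, rounds are 1..T.  Y i s is the s-th reward of arm i (s = 1..T),
  a t is the arm pulled in round t.\<close>

definition Ttil :: "nat \<Rightarrow> nat \<Rightarrow> real" where
  "Ttil k T = 16 * sqrt (real k * real T * ln (real T) / ln (real k))"

definition npulls :: "(nat \<Rightarrow> nat) \<Rightarrow> nat \<Rightarrow> nat \<Rightarrow> nat" where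
  "npulls a i t = card {r \<in> {1..<t}. a r = i}"

definition muhat :: "(nat \<Rightarrow> nat \<Rightarrow> real) \<Rightarrow> nat \<Rightarrow> nat \<Rightarrow> real" where
  "muhat Y i s = (\<Sum>r = 1..s. Y i r) / real s"

definition NCB :: "nat \<Rightarrow> (nat \<Rightarrow> nat \<Rightarrow> real) \<Rightarrow> (nat \<Rightarrow> nat) \<Rightarrow> nat \<Rightarrow> nat \<Rightarrow> real" where
  "NCB T Y a i t =
     (let n = npulls a i t; m = muhat Y i n in m + 4 * sqrt (m * ln (real T) / real n))"

text \<open>a is a possible run of NCB: in Phase I arbitrary arms (any realisation of the
  uniform choices), in Phase II an NCB-maximising arm (ties arbitrary).\<close>
definition ncb_run :: "nat \<Rightarrow> nat \<Rightarrow> (nat \<Rightarrow> nat \<Rightarrow> real) \<Rightarrow> (nat \<Rightarrow> nat) \<Rightarrow> bool" where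
  "ncb_run k T Y a \<longleftrightarrow>
     (\<forall>t \<in> {1..T}. a t < k) \<and>
     (\<forall>t \<in> {1..T}. Ttil k T < real t \<longrightarrow> (\<forall>j<k. NCB T Y a j t \<le> NCB T Y a (a t) t))"

definition thr :: "nat \<Rightarrow> nat \<Rightarrow> real" where
  "thr k T = sqrt (real k * ln (real k) * ln (real T)) / sqrt (real T)"

definition G1 :: "nat \<Rightarrow> nat \<Rightarrow> (nat \<Rightarrow> nat) \<Rightarrow> bool" where
  "G1 k T a \<longleftrightarrow>
     (\<forall>i<k. real (card {t \<in> {1..T}. real t \<le> Ttil k T \<and> a t = i}) \<ge> Ttil k T / (2 * real k))"

definition G2 :: "nat \<Rightarrow> nat \<Rightarrow> (nat \<Rightarrow> real) \<Rightarrow> (nat \<Rightarrow> nat \<Rightarrow> real) \<Rightarrow> bool" where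
  "G2 k T \<mu> Y \<longleftrightarrow>
     (\<forall>i<k. \<mu> i > 6 * thr k T \<longrightarrow>
        (\<forall>s::nat. Ttil k T / (2 * real k) \<le> real s \<and> s \<le> T \<longrightarrow>
           \<bar>\<mu> i - muhat Y i s\<bar> \<le> 3 * sqrt (\<mu> i * ln (real T) / real s)))"

definition G3 :: "nat \<Rightarrow> nat \<Rightarrow> (nat \<Rightarrow> real) \<Rightarrow> (nat \<Rightarrow> nat \<Rightarrow> real) \<Rightarrow> bool" where
  "G3 k T \<mu> Y \<longleftrightarrow>
     (\<forall>j<k. \<mu> j \<le> 6 * thr k T \<longrightarrow>
        (\<forall>s::nat. Ttil k T / (2 * real k) \<le> real s \<and> s \<le> T \<longrightarrow>
           muhat Y j s \<le> 9 * thr k T))"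

definition G :: "nat \<Rightarrow> nat \<Rightarrow> (nat \<Rightarrow> real) \<Rightarrow> (nat \<Rightarrow> nat \<Rightarrow> real) \<Rightarrow> (nat \<Rightarrow> nat) \<Rightarrow> bool" where
  "G k T \<mu> Y a \<longleftrightarrow> G1 k T a \<and> G2 k T \<mu> Y \<and> G3 k T \<mu> Y"

end

theory Submission
  imports Defs
begin

text \<open>On \<open>G\<close> the optimal arm has been pulled \<open>n \<ge> Ttil/(2k)\<close> times, and since
  \<open>Ttil/(2k) \<cdot> thr = 8 ln T\<close>, the hypothesis \<open>\<mu>* \<ge> 32 thr\<close> gives \<open>ln T / n \<le> \<mu>*/256\<close>.
  Then the concentration bound of \<open>G\<^sub>2\<close> is at most \<open>3\<mu>*/16\<close>, so the empirical mean \<open>h\<close> is at least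
  \<open>13\<mu>*/16\<close>, and the confidence term \<open>4\<surd>(h ln T/n) \<ge> 3\<surd>(\<mu>* ln T/n)\<close> outweighs the
  concentration error. If \<open>\<mu>* \<le> 6 thr\<close>, then \<open>\<mu>* = 0\<close> and the claim is trivial.\<close>

lemma confidence_bound_dominates:
  fixes \<mu> h q :: real
  assumes "0 \<le> \<mu>" "0 \<le> q" "q \<le> \<mu> / 256" "\<bar>\<mu> - h\<bar> \<le> 3 * sqrt (\<mu> * q)"
  shows "\<mu> \<le> h + 4 * sqrt (h * q)"
proof -
  have "\<mu> * q \<le> (\<mu> / 16)\<^sup>2"
    using mult_left_mono[OF assms(3,1)] by (simp add: power2_eq_square)
  then have "sqrt (\<mu> * q) \<le> \<mu> / 16"
    using assms(1) real_sqrt_le_mono by fastforce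
  then have h_ge: "13/16 * \<mu> \<le> h"
    using assms(4) by linarith
  have "9/16 * \<mu> * q \<le> h * q"
    using h_ge assms(1) by (intro mult_right_mono[OF _ assms(2)]) linarith
  then have "sqrt (9/16 * (\<mu> * q)) \<le> sqrt (h * q)"
    by simp
  moreover have "sqrt (9/16 * (\<mu> * q)) = 3/4 * sqrt (\<mu> * q)"
    by (simp add: real_sqrt_mult real_sqrt_divide)
  ultimately show ?thesis
    using assms(4) by linarith
qed

lemma log_over_pulls_le:
  fixes m \<theta> L \<mu> :: real and n :: nat
  assumes "m * \<theta> = 8 * L" "0 \<le> m" "m \<le> real n" "0 \<le> L" "0 \<le> \<mu>" "32 * \<theta> \<le> \<mu>"
  shows "L / real n \<le> \<mu> / 256"
proof (cases "m = 0")
  case True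
  then show ?thesis
    using assms by simp
next
  case False
  then have "L / real n \<le> L / m"
    using assms(2-4) by (intro divide_left_mono) auto
  also have "\<dots> = \<theta> / 8"
    using assms(1) False by (simp add: field_simps)
  finally show ?thesis
    using assms(6) by linarith
qed

lemma npulls_le: "npulls a i t \<le> t - 1"
proof -
  have "npulls a i t \<le> card {1..<t}"
    unfolding npulls_def by (rule card_mono) auto
  then show ?thesis
    by simp
qed

lemma card_rounds_before_le_npulls:
  assumes "x < real t"
  shows "card {r \<in> {1..T}. real r \<le> x \<and> a r = i} \<le> npulls a i t"
  unfolding npulls_def using assms by (intro card_mono) auto

lemma muhat_nonneg:
  assumes "\<forall>s\<in>{1..n}. 0 \<le> Y i s"
  shows "0 \<le> muhat Y i n"
  unfolding muhat_def using assms by (intro divide_nonneg_nonneg sum_nonneg) auto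

lemma thr_nonneg:
  assumes "1 \<le> k"
  shows "0 \<le> thr k T"
  unfolding thr_def using assms by (cases "T = 0") (auto intro!: divide_nonneg_nonneg mult_nonneg_nonneg)

lemma Ttil_mul_thr:
  assumes "2 \<le> k"
  shows "Ttil k T / (2 * real k) * thr k T = 8 * ln (real T)"
proof -
  define L where "L = ln (real T)"
  have L: "0 \<le> L"
    unfolding L_def by (cases "T = 0") auto
  have lnk: "0 < ln (real k)" and k: "0 < real k"
    using assms by auto
  have "Ttil k T / (2 * real k) * thr k T
      = 8 * (sqrt (real k * real T * L / ln (real k)) * sqrt (real k * ln (real k) * L))
          / (real k * sqrt (real T))"
    unfolding Ttil_def thr_def L_def by (simp add: field_simps)
  also have "sqrt (real k * real T * L / ln (real k)) * sqrt (real k * ln (real k) * L)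
      = sqrt ((real k * L)\<^sup>2 * real T)"
    unfolding real_sqrt_mult[symmetric] using lnk by (simp add: field_simps power2_eq_square)
  also have "\<dots> = real k * L * sqrt (real T)"
    using k L by (simp add: real_sqrt_mult)
  finally show ?thesis
    using k unfolding L_def by (cases "T = 0") auto
qed

theorem lemma2:
  fixes k T :: nat and \<mu> :: "nat \<Rightarrow> real" and Y :: "nat \<Rightarrow> nat \<Rightarrow> real"
    and a :: "nat \<Rightarrow> nat" and istar t :: nat
  assumes "k \<ge> 2"
    and "\<forall>i<k. 0 \<le> \<mu> i \<and> \<mu> i \<le> 1"
    and "\<forall>i<k. \<forall>s\<in>{1..T}. 0 \<le> Y i s \<and> Y i s \<le> 1"
    and "Max (\<mu> ` {..<k}) \<ge> 32 * thr k T"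
    and "istar < k" and "\<mu> istar = Max (\<mu> ` {..<k})"
    and "ncb_run k T Y a"
    and "G k T \<mu> Y a"
    and "Ttil k T < real t" and "t \<le> T"
  shows "NCB T Y a istar t \<ge> Max (\<mu> ` {..<k})"
proof -
  define n where "n = npulls a istar t"
  define h where "h = muhat Y istar n"
  have n_le: "n \<le> T"
    using npulls_le[of a istar t] assms(10) unfolding n_def by linarith
  have n_ge: "Ttil k T / (2 * real k) \<le> real n"
    using assms(5,8) card_rounds_before_le_npulls[OF assms(9), of T a istar]
    unfolding G_def G1_def n_def by (meson of_nat_le_iff order_trans)
  have h: "0 \<le> h"
    unfolding h_def using assms(3,5) n_le by (intro muhat_nonneg) auto
  have NCB: "NCB T Y a istar t = h + 4 * sqrt (h * (ln (real T) / real n))"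
    unfolding NCB_def n_def h_def Let_def by simp
  have L: "0 \<le> ln (real T)"
    by (cases "T = 0") auto
  have Ttil: "0 \<le> Ttil k T"
    unfolding Ttil_def using assms(1) L by simp
  have \<mu>: "0 \<le> \<mu> istar"
    using assms(2,5) by auto
  show ?thesis
  proof (cases "\<mu> istar > 6 * thr k T")
    case False
    then have "\<mu> istar = 0"
      using assms(4,6) thr_nonneg[of k T] assms(1) \<mu> by linarith
    then show ?thesis
      using assms(6) NCB h L by simp
  next
    case True
    have concentration: "\<bar>\<mu> istar - h\<bar> \<le> 3 * sqrt (\<mu> istar * (ln (real T) / real n))"
      using assms(5,8) True n_ge n_le unfolding G_def G2_def h_def by auto
    have "ln (real T) / real n \<le> \<mu> istar / 256"
      using Ttil_mul_thr[OF assms(1), of T] n_ge Ttil L \<mu> assms(4,6)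
      by (intro log_over_pulls_le) auto
    then have "\<mu> istar \<le> h + 4 * sqrt (h * (ln (real T) / real n))"
      using L by (intro confidence_bound_dominates[OF \<mu> _ _ concentration]) auto
    then show ?thesis
      using NCB assms(6) by simp
  qed
qed

end
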